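(* Let $\mathcal A$ be a (commutative or noncommutative, unital, nonzero) ring. Then $\mathcal A$ as a $\mathbb Z$-algebra is strongly simple if and only if $\mathcal A\simeq\mathbb Z/p\mathbb Z$ for some prime $p$.
   Context: An additive subgroup $M$ of a ring $\mathcal A$ is a (two-sided) Mathieu subspace if whenever $a\in\mathcal A$ satisfies $a^m\in M$ for all $m\ge1$, then for all $b,c\in\mathcal A$ there is $N$ with $ba^mc\in M$ for all $m\ge N$. $\mathcal A$ is strongly simple (as a $\mathbb Z$-algebra) if its only Mathieu subspaces are $0$ and $\mathcal A$. *)

theory Defs
  imports "HOL-Number_Theory.Residues" "HOL-Algebra.QuotRing"
begin

definition additive_subgroup :: "('a::ring_1) set \<Rightarrow> bool" where
  "additive_subgroup M \<longleftrightarrow> 0 \<in> M \<and> (\<forall>x\<in>M. \<forall>y\<in>M. x + y \<in> M) \<and> (\<forall>x\<in>M. - x \<in> M)"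

text \<open>Two-sided Mathieu subspace (as a Z-algebra, i.e. an additive subgroup).\<close>
definition mathieu_subspace :: "('a::ring_1) set \<Rightarrow> bool" where
  "mathieu_subspace M \<longleftrightarrow> additive_subgroup M \<and>
     (\<forall>a. (\<forall>m::nat. m \<ge> 1 \<longrightarrow> a ^ m \<in> M) \<longrightarrow>
        (\<forall>b c. \<exists>N. \<forall>m\<ge>N. b * a ^ m * c \<in> M))"

definition strongly_simple :: "'a::ring_1 itself \<Rightarrow> bool" where
  "strongly_simple _ \<longleftrightarrow> (\<forall>M::'a set. mathieu_subspace M \<longrightarrow> M = {0} \<or> M = UNIV)"

definition type_ring :: "('a::ring_1) ring" where
  "type_ring = \<lparr>carrier = UNIV, monoid.mult = (*), one = 1, zero = 0, add = (+)\<rparr>"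

end

theory Submission
  imports Defs
begin

text \<open>
  An ideal is a Mathieu subspace, so in a strongly simple ring \<open>A\<close> every nonzero central
  element, in particular every nonzero integer, is invertible, and the integer fractions form a
  central prime subfield \<open>F\<close>. Let \<open>y \<notin> F\<close>. If \<open>y\<^sup>2 \<notin> F y\<close>, no nonzero element of \<open>F y\<close> has its
  square in \<open>F y\<close>, so \<open>F y\<close> is vacuously a Mathieu subspace; containing \<open>y \<noteq> 0\<close>, it contains \<open>1\<close>,
  whence \<open>y \<in> F\<close>. Hence \<open>(y + k)\<^sup>2 \<in> F (y + k)\<close> for every integer \<open>k\<close>, and comparing the
  coefficients of \<open>y\<close> for \<open>k = 0, 1, 2\<close> gives \<open>2 = 0\<close> and \<open>y\<^sup>2 = y\<close>. Then \<open>A\<close> is Boolean, hence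
  commutative, so \<open>y\<close> is an invertible idempotent, i.e. \<open>y = 1 \<in> F\<close>: thus \<open>A = F\<close>.
  Characteristic 0 is impossible because the fractions \<open>2a/b\<close> with \<open>b\<close> odd form a Mathieu
  subspace of \<open>\<rat>\<close> other than \<open>0\<close> and \<open>\<rat>\<close>; so \<open>A \<cong> \<int>/p\<int>\<close>. Conversely, every nonzero
  additive subgroup of \<open>\<int>/p\<int>\<close> is the whole ring.
\<close>

section \<open>Additive subgroups and Mathieu subspaces\<close>

lemma additive_subgroup_range:
  fixes f :: "'b::ab_group_add \<Rightarrow> 'a::ring_1"
  assumes add: "\<And>x y. f (x + y) = f x + f y"
  shows "additive_subgroup (range f)"
proof -
  have zero: "f 0 = 0"
    using add[of 0 0] by simp
  have neg: "f (- x) = - f x" for x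
    using add[of x "- x"] zero by (simp add: add_eq_0_iff)
  have "0 \<in> range f"
    using zero by (metis rangeI)
  then show ?thesis
    unfolding additive_subgroup_def by (auto simp flip: add neg)
qed

lemma additive_subgroup_of_nat_mult:
  assumes "additive_subgroup M" and "x \<in> M"
  shows "of_nat n * x \<in> M"
  using assms by (induction n) (auto simp: additive_subgroup_def distrib_right)

lemma additive_subgroup_of_int_mult:
  assumes "additive_subgroup M" and "x \<in> M"
  shows "of_int k * x \<in> M"
proof (cases k rule: int_cases)
  case (nonneg n)
  then show ?thesis
    using additive_subgroup_of_nat_mult[OF assms] by simp
next
  case (neg n)
  then show ?thesis
    using additive_subgroup_of_nat_mult[OF assms, of "Suc n"] assms(1)
    by (simp add: additive_subgroup_def del: of_nat_Suc)
qed

lemma mathieu_subspace_if_ideal: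
  assumes "additive_subgroup I"
    and "\<And>x b. x \<in> I \<Longrightarrow> b * x \<in> I" and "\<And>x b. x \<in> I \<Longrightarrow> x * b \<in> I"
  shows "mathieu_subspace I"
  using assms unfolding mathieu_subspace_def by blast

lemma mathieu_subspace_if_square_mem_imp_zero:
  assumes "additive_subgroup M" and "\<And>a. a \<in> M \<Longrightarrow> a\<^sup>2 \<in> M \<Longrightarrow> a = 0"
  shows "mathieu_subspace M"
proof -
  have "b * a ^ m * c \<in> M" if "\<forall>m::nat. m \<ge> 1 \<longrightarrow> a ^ m \<in> M" and "m \<ge> 1" for a b c :: 'a and m
  proof -
    have "a = 0"
      using assms(2)[of a] that(1)[rule_format, of 1] that(1)[rule_format, of 2] by simp
    then show ?thesis
      using \<open>m \<ge> 1\<close> assms(1) by (simp add: additive_subgroup_def zero_power)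
  qed
  then show ?thesis
    using assms(1) unfolding mathieu_subspace_def by blast
qed

lemma strongly_simpleD:
  fixes M :: "'a::ring_1 set"
  assumes "strongly_simple TYPE('a)" and "mathieu_subspace M"
  shows "M = {0} \<or> M = UNIV"
  using assms unfolding strongly_simple_def by blast

lemma strongly_simple_ideal_trivial:
  fixes I :: "'a::ring_1 set"
  assumes "strongly_simple TYPE('a)" and "additive_subgroup I"
    and "\<And>x b. x \<in> I \<Longrightarrow> b * x \<in> I" and "\<And>x b. x \<in> I \<Longrightarrow> x * b \<in> I"
  shows "I = {0} \<or> I = UNIV"
  using assms(1) by (rule strongly_simpleD) (rule mathieu_subspace_if_ideal[OF assms(2-4)])

lemma strongly_simple_central_invertible:
  fixes y :: "'a::ring_1"
  assumes "strongly_simple TYPE('a)" and "y \<noteq> 0" and central: "\<And>b. y * b = b * y"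
  obtains x where "x * y = 1"
proof -
  let ?I = "range (\<lambda>x. x * y)"
  have "?I = {0} \<or> ?I = UNIV"
  proof (rule strongly_simple_ideal_trivial[OF assms(1)])
    show "additive_subgroup ?I"
      by (rule additive_subgroup_range) (simp add: distrib_right)
    show "b * x \<in> ?I" if x: "x \<in> ?I" for x b
    proof -
      obtain z where "x = z * y"
        using x by blast
      then have "b * x = (b * z) * y"
        by (simp add: mult.assoc)
      then show ?thesis
        by blast
    qed
    show "x * b \<in> ?I" if x: "x \<in> ?I" for x b
    proof -
      obtain z where "x = z * y"
        using x by blast
      then have "x * b = (z * b) * y"
        by (simp add: mult.assoc central)
      then show ?thesis
        by blast
    qed
  qed
  moreover have "y \<in> ?I"
    by (metis mult_1_left rangeI)
  ultimately have "1 \<in> ?I"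
    using assms(2) by blast
  then show ?thesis
    using that by (metis rangeE)
qed

lemma idempotent_ring_commute:
  fixes x y :: "'a::ring_1"
  assumes idem: "\<And>z::'a. z * z = z"
  shows "x * y = y * x"
proof -
  have char_2: "z + z = 0" for z :: 'a
    using idem[of "z + z"] idem[of z] by (simp add: algebra_simps)
  have "x * y + y * x = 0"
    using idem[of "x + y"] idem[of x] idem[of y] by (simp add: algebra_simps)
  then have "- (x * y) = y * x"
    by (rule add.inverse_unique)
  moreover have "- (x * y) = x * y"
    using char_2 by (rule add.inverse_unique)
  ultimately show ?thesis
    by simp
qed

lemma square_shift_eq:
  fixes y t c d :: "'a::ring_1"
  assumes "y\<^sup>2 = c * y" and "(y + t)\<^sup>2 = d * (y + t)" and "t * y = y * t"
  shows "(c + 2 * t - d) * y = (d - t) * t"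
proof -
  have "(y + t)\<^sup>2 = y\<^sup>2 + 2 * t * y + t * t"
    using assms(3) by (simp add: power2_eq_square algebra_simps mult_2)
  then show ?thesis
    using assms(1,2) by (simp add: algebra_simps)
qed

lemma of_int_power_mult:
  fixes a :: "'a::ring_1"
  assumes "of_int q * a = of_int p"
  shows "of_int (q ^ m) * a ^ m = of_int (p ^ m)"
proof (induction m)
  case (Suc m)
  have "of_int (q ^ Suc m) * a ^ Suc m = of_int (q ^ m) * (of_int q * a ^ m) * a"
    by (simp only: power_Suc2 of_int_mult mult.assoc)
  also have "\<dots> = of_int (q ^ m) * a ^ m * (of_int q * a)"
    by (simp only: mult.assoc mult_of_int_commute[of q "a ^ m"])
  also have "\<dots> = of_int (p ^ Suc m)"
    by (simp only: Suc.IH assms power_Suc2 of_int_mult)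
  finally show ?case .
qed simp

lemma of_int_mult_clear_denominators:
  fixes a b :: "'a::ring_1"
  assumes "of_int r * b = of_int s" and "of_int q * a = of_int p"
  shows "of_int (r * q ^ m) * (b * a ^ m) = of_int (s * p ^ m)"
proof -
  have "of_int (q ^ m) * (b * a ^ m) = b * (of_int (q ^ m) * a ^ m)"
    by (simp only: mult.assoc[symmetric] mult_of_int_commute[of "q ^ m" b])
  then have "of_int (r * q ^ m) * (b * a ^ m) = of_int r * b * (of_int (q ^ m) * a ^ m)"
    by (simp only: of_int_mult mult.assoc)
  also have "\<dots> = of_int (s * p ^ m)"
    by (simp only: assms(1) of_int_power_mult[OF assms(2)] of_int_mult)
  finally show ?thesis .
qed

section \<open>Rings in which nonzero integers are invertible\<close>

definition nonzero_of_int_invertible :: "'a::ring_1 itself \<Rightarrow> bool" where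
  "nonzero_of_int_invertible _ \<longleftrightarrow> (\<forall>k. (of_int k :: 'a) \<noteq> 0 \<longrightarrow> (\<exists>u::'a. of_int k * u = 1))"

text \<open>
  When \<open>nonzero_of_int_invertible TYPE('a)\<close> holds, these fractions form the prime subfield, a copy
  of \<open>\<rat>\<close> or of \<open>\<int>/p\<int>\<close> in the centre.
\<close>
definition int_fractions :: "'a::ring_1 set" where
  "int_fractions = {x. \<exists>a b. of_int b \<noteq> (0::'a) \<and> of_int b * x = of_int a}"

lemma of_int_in_int_fractions: "of_int k \<in> int_fractions"
  unfolding int_fractions_def by (intro CollectI exI[of _ k] exI[of _ 1]) simp

lemma int_fractions_uminus:
  assumes "x \<in> int_fractions"
  shows "- x \<in> int_fractions"
proof -
  obtain a b where "of_int b \<noteq> (0::'a)" and "of_int b * x = of_int a"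
    using assms unfolding int_fractions_def by blast
  then have "of_int b \<noteq> (0::'a)" and "of_int b * - x = of_int (- a)"
    by simp_all
  then show ?thesis
    unfolding int_fractions_def by blast
qed

lemma prime_CHAR_of_int_inverse:
  assumes "prime CHAR('a::ring_1)" and "of_int k \<noteq> (0::'a)"
  obtains u where "of_int u * of_int k = (1::'a)"
proof -
  have "\<not> int CHAR('a) dvd k"
    using assms(2) of_int_eq_0_iff_char_dvd by blast
  then have "coprime k (int CHAR('a))"
    using assms(1) by (metis coprime_commute prime_imp_coprime prime_nat_int_transfer)
  then obtain u where "[k * u = 1] (mod int CHAR('a))"
    using cong_solve_coprime_int by blast
  then have "of_int (k * u) = (of_int 1 :: 'a)"
    by (simp only: of_int_eq_iff_cong_CHAR)
  then show ?thesis
    using that by (metis mult.commute of_int_1 of_int_mult)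
qed

lemma int_fractions_eq_range_of_int:
  assumes "prime CHAR('a::ring_1)"
  shows "int_fractions = range (of_int :: int \<Rightarrow> 'a)"
proof
  show "int_fractions \<subseteq> range (of_int :: int \<Rightarrow> 'a)"
  proof
    fix x :: 'a assume "x \<in> int_fractions"
    then obtain a b where b: "of_int b \<noteq> (0::'a)" and x: "of_int b * x = of_int a"
      unfolding int_fractions_def by blast
    obtain u where u: "of_int u * of_int b = (1::'a)"
      using prime_CHAR_of_int_inverse[OF assms b] by blast
    have "x = of_int u * (of_int b * x)"
      using u by (simp flip: mult.assoc)
    then have "x = of_int (u * a)"
      by (simp add: x)
    then show "x \<in> range of_int"
      by blast
  qed
qed (auto intro: of_int_in_int_fractions)

lemma strongly_simple_imp_nonzero_of_int_invertible:
  assumes "strongly_simple TYPE('a::ring_1)"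
  shows "nonzero_of_int_invertible TYPE('a)"
  unfolding nonzero_of_int_invertible_def
proof (intro allI impI)
  fix k assume k: "(of_int k :: 'a) \<noteq> 0"
  obtain u where u: "u * of_int k = (1::'a)"
    using strongly_simple_central_invertible[OF assms k mult_of_int_commute] by blast
  then have "of_int k * u = (1::'a)"
    by (simp add: mult_of_int_commute[of k u])
  then show "\<exists>u::'a. of_int k * u = 1" ..
qed

context
  assumes invertible: "nonzero_of_int_invertible TYPE('a::ring_1)"
begin

lemma of_int_mult_eq_0_iff: "of_int k * x = (0::'a) \<longleftrightarrow> of_int k = (0::'a) \<or> x = 0"
proof -
  have "x = 0" if x: "of_int k * x = (0::'a)" and k: "of_int k \<noteq> (0::'a)"
  proof -
    obtain u :: 'a where "of_int k * u = 1"
      using invertible k unfolding nonzero_of_int_invertible_def by blast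
    then have "u * of_int k = 1"
      by (simp add: mult_of_int_commute[of k u])
    then have "x = u * (of_int k * x)"
      by (simp flip: mult.assoc)
    then show "x = 0"
      using x by simp
  qed
  then show ?thesis
    by auto
qed

lemma of_int_mult_left_cancel:
  fixes x y :: 'a
  assumes "of_int k \<noteq> (0::'a)" and "of_int k * x = of_int k * y"
  shows "x = y"
  using of_int_mult_eq_0_iff[of k "x - y"] assms by (simp add: right_diff_distrib)

lemma int_fractions_add:
  assumes "x \<in> int_fractions" and "y \<in> int_fractions"
  shows "x + y \<in> (int_fractions :: 'a set)"
proof -
  obtain a b c d where b: "of_int b \<noteq> (0::'a)" "of_int b * x = of_int a"
    and d: "of_int d \<noteq> (0::'a)" "of_int d * y = of_int c"
    using assms unfolding int_fractions_def by blast
  have "of_int (b * d) * (x + y) = of_int d * (of_int b * x) + of_int b * (of_int d * y)"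
    by (simp add: distrib_left mult.commute[of d b] flip: mult.assoc of_int_mult)
  also have "\<dots> = of_int (d * a + b * c)"
    by (simp add: b d)
  finally have "of_int (b * d) * (x + y) = (of_int (d * a + b * c) :: 'a)" .
  moreover have "of_int (b * d) \<noteq> (0::'a)"
    using b d by (simp add: of_int_mult_eq_0_iff)
  ultimately show ?thesis
    unfolding int_fractions_def by blast
qed

lemma int_fractions_diff:
  assumes "x \<in> int_fractions" and "y \<in> int_fractions"
  shows "x - y \<in> (int_fractions :: 'a set)"
  using int_fractions_add[OF assms(1) int_fractions_uminus[OF assms(2)]] by simp

lemma int_fractions_mult:
  assumes "x \<in> int_fractions" and "y \<in> int_fractions"
  shows "x * y \<in> (int_fractions :: 'a set)"
proof -
  obtain a b c d where b: "of_int b \<noteq> (0::'a)" "of_int b * x = of_int a"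
    and d: "of_int d \<noteq> (0::'a)" "of_int d * y = of_int c"
    using assms unfolding int_fractions_def by blast
  have "of_int (d * b) * (x * y) = of_int d * (of_int b * x) * y"
    by (simp add: mult.assoc)
  also have "\<dots> = of_int a * (of_int d * y)"
    by (simp add: b mult.commute[of d a] flip: mult.assoc of_int_mult)
  also have "\<dots> = of_int (a * c)"
    by (simp add: d)
  finally have "of_int (d * b) * (x * y) = (of_int (a * c) :: 'a)" .
  moreover have "of_int (d * b) \<noteq> (0::'a)"
    using b d by (simp add: of_int_mult_eq_0_iff)
  ultimately show ?thesis
    unfolding int_fractions_def by blast
qed

lemma int_fractions_commute:
  assumes "x \<in> int_fractions"
  shows "x * z = z * (x :: 'a)"
proof -
  obtain a b where b: "of_int b \<noteq> (0::'a)" "of_int b * x = of_int a"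
    using assms unfolding int_fractions_def by blast
  have "of_int b * (x * z) = of_int a * z"
    by (simp add: b flip: mult.assoc)
  moreover have "of_int b * (z * x) = z * (of_int b * x)"
    by (simp only: mult.assoc[symmetric] mult_of_int_commute[of b z])
  ultimately have "of_int b * (x * z - z * x) = 0"
    by (simp add: b right_diff_distrib mult_of_int_commute[of a z])
  then show ?thesis
    using b by (simp add: of_int_mult_eq_0_iff)
qed

lemma int_fractions_inverse:
  assumes "x \<in> int_fractions" and "x \<noteq> 0"
  obtains v where "v \<in> int_fractions" and "v * x = (1::'a)"
proof -
  obtain a b where b: "of_int b \<noteq> (0::'a)" "of_int b * x = of_int a"
    using assms(1) unfolding int_fractions_def by blast
  have "of_int a \<noteq> (0::'a)"
    using b assms(2) by (auto simp: of_int_mult_eq_0_iff)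
  then obtain u :: 'a where u: "of_int a * u = 1"
    using invertible unfolding nonzero_of_int_invertible_def by blast
  have "of_int a * (u * of_int b) = of_int b"
    by (simp add: u flip: mult.assoc)
  then have "u * of_int b \<in> int_fractions"
    using \<open>of_int a \<noteq> 0\<close> unfolding int_fractions_def by blast
  moreover have "u * of_int b * x = 1"
  proof -
    have "u * of_int b * x = u * of_int a"
      by (simp add: b mult.assoc)
    then show ?thesis
      using u mult_of_int_commute[of a u] by simp
  qed
  ultimately show ?thesis
    using that by blast
qed

lemma int_fractions_cancel:
  assumes "f \<in> int_fractions" and "f \<noteq> 0" and "f * y \<in> int_fractions"
  shows "y \<in> (int_fractions :: 'a set)"
proof -
  obtain v where v: "v \<in> int_fractions" "v * f = 1"
    using int_fractions_inverse assms(1,2) by blast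
  then have "y = v * (f * y)"
    by (simp flip: mult.assoc)
  then show ?thesis
    using int_fractions_mult[OF v(1) assms(3)] by simp
qed

lemma int_fractions_square_mem_multiples:
  assumes "f \<in> int_fractions" and "f \<noteq> 0" and "g \<in> int_fractions" and "(f * y)\<^sup>2 = g * y"
  shows "\<exists>c\<in>int_fractions. y\<^sup>2 = c * (y :: 'a)"
proof -
  obtain v where v: "v \<in> int_fractions" "v * f = 1"
    using int_fractions_inverse assms(1,2) by blast
  have yf: "y * f = f * y"
    using int_fractions_commute[OF assms(1)] by simp
  have "(f * y)\<^sup>2 = f * (y * f) * y"
    by (simp add: power2_eq_square mult.assoc)
  also have "\<dots> = f * f * y\<^sup>2"
    by (simp add: yf power2_eq_square mult.assoc)
  finally have ffy: "f * f * y\<^sup>2 = g * y"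
    using assms(4) by simp
  have "y\<^sup>2 = v * (v * f) * f * y\<^sup>2"
    using v(2) by simp
  also have "\<dots> = v * v * (f * f * y\<^sup>2)"
    by (simp add: mult.assoc)
  also have "\<dots> = (v * v * g) * y"
    unfolding ffy by (simp add: mult.assoc)
  finally have "y\<^sup>2 = (v * v * g) * y" .
  then show ?thesis
    using int_fractions_mult v(1) assms(3) by blast
qed

lemma additive_subgroup_int_fraction_multiples:
  "additive_subgroup ((\<lambda>f. f * y) ` (int_fractions :: 'a set))"
  unfolding additive_subgroup_def
proof (intro conjI ballI)
  show "0 \<in> (\<lambda>f. f * y) ` int_fractions"
    using of_int_in_int_fractions[where 'a = 'a, of 0] by (rule rev_image_eqI) simp
next
  fix a b assume "a \<in> (\<lambda>f. f * y) ` int_fractions" "b \<in> (\<lambda>f. f * y) ` int_fractions"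
  then obtain f g where "f \<in> int_fractions" "g \<in> int_fractions" and "a = f * y" "b = g * y"
    by blast
  then show "a + b \<in> (\<lambda>f. f * y) ` int_fractions"
    using int_fractions_add by (intro rev_image_eqI[of "f + g"]) (simp_all add: distrib_right)
next
  fix a assume "a \<in> (\<lambda>f. f * y) ` int_fractions"
  then obtain f where "f \<in> int_fractions" and "a = f * y"
    by blast
  then show "- a \<in> (\<lambda>f. f * y) ` int_fractions"
    using int_fractions_uminus by (intro rev_image_eqI[of "- f"]) simp_all
qed

lemma prime_CHAR_if_neq_0:
  assumes "CHAR('a) \<noteq> 0"
  shows "prime CHAR('a)"
  unfolding prime_nat_iff
proof (intro conjI allI impI)
  show "1 < CHAR('a)"
    using assms CHAR_not_1[where 'a = 'a] by linarith
next
  fix m assume "m dvd CHAR('a)"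
  then obtain w where w: "CHAR('a) = m * w"
    by blast
  then have "of_int (int m) * of_nat w = (0::'a)"
    by (metis of_int_of_nat_eq of_nat_CHAR of_nat_mult)
  then have "of_nat m = (0::'a) \<or> of_nat w = (0::'a)"
    using of_int_mult_eq_0_iff[of "int m" "of_nat w"] by simp
  then have "CHAR('a) dvd m \<or> CHAR('a) dvd w"
    by (simp add: of_nat_eq_0_iff_char_dvd)
  then show "m = 1 \<or> m = CHAR('a)"
    using w assms by (auto dest: dvd_imp_le)
qed

end

section \<open>Strongly simple rings are prime fields\<close>

lemma strongly_simple_square_eq_fraction_mult:
  fixes y :: "'a::ring_1"
  assumes SS: "strongly_simple TYPE('a)" and y: "y \<notin> int_fractions"
  shows "\<exists>c\<in>int_fractions. y\<^sup>2 = c * y"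
proof (rule ccontr)
  assume no_c: "\<not> (\<exists>c\<in>int_fractions. y\<^sup>2 = c * y)"
  have inv: "nonzero_of_int_invertible TYPE('a)"
    using SS by (rule strongly_simple_imp_nonzero_of_int_invertible)
  let ?M = "(\<lambda>f. f * y) ` int_fractions"
  have "a = 0" if a: "a \<in> ?M" and a2: "a\<^sup>2 \<in> ?M" for a
  proof (rule ccontr)
    assume "a \<noteq> 0"
    obtain f g where f: "f \<in> int_fractions" "a = f * y" and g: "g \<in> int_fractions" "a\<^sup>2 = g * y"
      using a a2 by blast
    have "f \<noteq> 0"
      using \<open>a \<noteq> 0\<close> f(2) by auto
    moreover have "(f * y)\<^sup>2 = g * y"
      using f(2) g(2) by simp
    ultimately show False
      using int_fractions_square_mem_multiples[OF inv f(1) _ g(1)] no_c by blast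
  qed
  then have "mathieu_subspace ?M"
    by (intro mathieu_subspace_if_square_mem_imp_zero additive_subgroup_int_fraction_multiples[OF inv])
  then have "?M = {0} \<or> ?M = UNIV"
    by (rule strongly_simpleD[OF SS])
  moreover have "y \<in> ?M"
    using of_int_in_int_fractions[where 'a = 'a, of 1] by (rule rev_image_eqI) simp
  moreover have "y \<noteq> 0"
    using y of_int_in_int_fractions[where 'a = 'a, of 0] by auto
  ultimately have "1 \<in> ?M"
    by blast
  then obtain f where f: "f \<in> int_fractions" "1 = f * y"
    by blast
  have "f \<noteq> 0"
    using f(2) by auto
  moreover have "f * y \<in> int_fractions"
    using f(2) of_int_in_int_fractions[where 'a = 'a, of 1] by simp
  ultimately have "y \<in> int_fractions"
    by (rule int_fractions_cancel[OF inv f(1)])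
  with y show False ..
qed

lemma strongly_simple_shifted_square_eq:
  fixes y c :: "'a::ring_1"
  assumes SS: "strongly_simple TYPE('a)" and y: "y \<notin> int_fractions"
    and c: "c \<in> int_fractions" "y\<^sup>2 = c * y"
  obtains d where "c + 2 * of_int k - d = 0" and "(d - of_int k) * of_int k = 0"
proof -
  have inv: "nonzero_of_int_invertible TYPE('a)"
    using SS by (rule strongly_simple_imp_nonzero_of_int_invertible)
  let ?t = "of_int k :: 'a"
  have "y + ?t \<notin> int_fractions"
  proof
    assume "y + ?t \<in> int_fractions"
    then have "y + ?t - ?t \<in> int_fractions"
      by (rule int_fractions_diff[OF inv _ of_int_in_int_fractions])
    with y show False
      by simp
  qed
  from strongly_simple_square_eq_fraction_mult[OF SS this]
  obtain d where d: "d \<in> int_fractions" "(y + ?t)\<^sup>2 = d * (y + ?t)" ..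
  have eq: "(c + 2 * ?t - d) * y = (d - ?t) * ?t"
    using c(2) d(2) by (rule square_shift_eq) (rule mult_of_int_commute)
  have "c + of_int (2 * k) - d \<in> int_fractions"
    by (rule int_fractions_diff[OF inv int_fractions_add[OF inv c(1) of_int_in_int_fractions] d(1)])
  then have coeff: "c + 2 * ?t - d \<in> int_fractions"
    by simp
  have rhs: "(d - ?t) * ?t \<in> int_fractions"
    by (rule int_fractions_mult[OF inv int_fractions_diff[OF inv d(1) of_int_in_int_fractions]
          of_int_in_int_fractions])
  have "c + 2 * ?t - d = 0"
    using int_fractions_cancel[OF inv coeff _ rhs[folded eq]] y by blast
  moreover from this have "(d - ?t) * ?t = 0"
    using eq by simp
  ultimately show ?thesis
    using that by blast
qed

text \<open>Compare the coefficients of \<open>y\<close> in the quadratic relations of \<open>y\<close>, \<open>y + 1\<close> and \<open>y + 2\<close>.\<close>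

lemma strongly_simple_non_fraction_idempotent:
  fixes y :: "'a::ring_1"
  assumes SS: "strongly_simple TYPE('a)" and y: "y \<notin> int_fractions"
  shows "(2::'a) = 0" and "y\<^sup>2 = y"
proof -
  from strongly_simple_square_eq_fraction_mult[OF SS y]
  obtain c where c: "c \<in> int_fractions" "y\<^sup>2 = c * y" ..
  obtain d1 where d1: "c + 2 * of_int 1 - d1 = 0" "(d1 - of_int 1) * of_int 1 = (0::'a)"
    by (rule strongly_simple_shifted_square_eq[OF SS y c])
  obtain d2 where d2: "c + 2 * of_int 2 - d2 = 0" "(d2 - of_int 2) * of_int 2 = (0::'a)"
    by (rule strongly_simple_shifted_square_eq[OF SS y c])
  have "c + 2 = 1"
    using d1 by simp
  have "c = (c + 2) - 2"
    by simp
  also have "\<dots> = - 1"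
    using \<open>c + 2 = 1\<close> by simp
  finally have "c = - 1" .
  have "c + 2 * 2 = d2"
    using d2(1) by (simp only: of_int_numeral right_minus_eq)
  then have "d2 - 2 = 1"
    using \<open>c = - 1\<close> by (simp flip: \<open>c + 2 * 2 = d2\<close>)
  then show two: "(2::'a) = 0"
    using d2(2) by simp
  have "y + y = 0"
    using two by (simp flip: mult_2)
  then have "- y = y"
    by (rule add.inverse_unique)
  moreover have "y\<^sup>2 = - y"
    using c(2) \<open>c = - 1\<close> by simp
  ultimately show "y\<^sup>2 = y"
    by simp
qed

lemma strongly_simple_idempotent_if_non_fraction:
  fixes y z :: "'a::ring_1"
  assumes SS: "strongly_simple TYPE('a)" and y: "y \<notin> int_fractions"
  shows "z * z = z"
proof (cases "z \<in> int_fractions")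
  case False
  then show ?thesis
    using strongly_simple_non_fraction_idempotent(2)[OF SS] by (simp add: power2_eq_square)
next
  case True
  have inv: "nonzero_of_int_invertible TYPE('a)"
    using SS by (rule strongly_simple_imp_nonzero_of_int_invertible)
  have "z + y \<notin> int_fractions"
  proof
    assume "z + y \<in> int_fractions"
    then have "z + y - z \<in> int_fractions"
      by (rule int_fractions_diff[OF inv _ True])
    with y show False
      by simp
  qed
  then have "(z + y) * (z + y) = z + y"
    using strongly_simple_non_fraction_idempotent(2)[OF SS] by (simp add: power2_eq_square)
  moreover have "z * y + y * z = 2 * (z * y)"
    using int_fractions_commute[OF inv True, of y] by (simp add: mult_2)
  then have "z * y + y * z = 0"
    using strongly_simple_non_fraction_idempotent(1)[OF SS y] by simp
  moreover have "(z + y) * (z + y) = z * z + (z * y + y * z) + y * y"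
    by (simp add: algebra_simps)
  moreover have "y * y = y"
    using strongly_simple_non_fraction_idempotent(2)[OF SS y] by (simp add: power2_eq_square)
  ultimately show ?thesis
    by simp
qed

lemma strongly_simple_int_fractions_eq_UNIV:
  assumes SS: "strongly_simple TYPE('a::ring_1)"
  shows "int_fractions = (UNIV :: 'a set)"
proof (rule ccontr)
  assume "int_fractions \<noteq> (UNIV :: 'a set)"
  then obtain y :: 'a where y: "y \<notin> int_fractions"
    by blast
  have idem: "z * z = z" for z :: 'a
    using SS y by (rule strongly_simple_idempotent_if_non_fraction)
  have "y \<noteq> 0"
    using y of_int_in_int_fractions[where 'a = 'a, of 0] by auto
  then obtain x where x: "x * y = 1"
    using strongly_simple_central_invertible[OF SS _ idempotent_ring_commute[OF idem]] by blast
  have "y = x * (y * y)"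
    using x by (simp flip: mult.assoc)
  then have "y = 1"
    using x idem[of y] by simp
  with y show False
    using of_int_in_int_fractions[where 'a = 'a, of 1] by simp
qed

section \<open>Characteristic zero is impossible\<close>

text \<open>The rationals \<open>2a/b\<close> with \<open>b\<close> odd: a Mathieu subspace of \<open>\<rat>\<close> that is neither \<open>0\<close> nor \<open>\<rat>\<close>.\<close>
definition even_over_odd :: "'a::ring_1 set" where
  "even_over_odd = {x. \<exists>a b. odd b \<and> of_int b * x = of_int (2 * a)}"

lemma additive_subgroup_even_over_odd: "additive_subgroup (even_over_odd :: 'a::ring_1 set)"
  unfolding additive_subgroup_def
proof (intro conjI ballI)
  show "0 \<in> (even_over_odd :: 'a set)"
    unfolding even_over_odd_def by (intro CollectI exI[of _ 0] exI[of _ 1]) simp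
next
  fix x y :: 'a assume "x \<in> even_over_odd" "y \<in> even_over_odd"
  then obtain a b c d where b: "odd b" "of_int b * x = of_int (2 * a)"
    and d: "odd d" "of_int d * y = of_int (2 * c)"
    unfolding even_over_odd_def by blast
  have "of_int (b * d) * (x + y) = of_int d * (of_int b * x) + of_int b * (of_int d * y)"
    by (simp add: distrib_left mult.commute[of d b] flip: mult.assoc of_int_mult)
  also have "\<dots> = of_int (d * (2 * a) + b * (2 * c))"
    by (simp only: b d of_int_add of_int_mult)
  also have "\<dots> = of_int (2 * (d * a + b * c))"
    by (rule arg_cong[where f = of_int]) (simp add: algebra_simps)
  finally show "x + y \<in> even_over_odd"
    using b d unfolding even_over_odd_def by (intro CollectI exI[of _ "d * a + b * c"] exI[of _ "b * d"]) simp
next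
  fix x :: 'a assume "x \<in> even_over_odd"
  then obtain a b where "odd b" "of_int b * x = of_int (2 * a)"
    unfolding even_over_odd_def by blast
  then show "- x \<in> even_over_odd"
    unfolding even_over_odd_def by (intro CollectI exI[of _ "- a"] exI[of _ b]) simp
qed

lemma even_over_odd_if_two_power_mult:
  assumes inv: "nonzero_of_int_invertible TYPE('a::ring_1)" and "of_int (2 ^ e) \<noteq> (0::'a)"
    and "odd r" and "of_int (2 ^ e * r) * x = (of_int (2 ^ Suc e * t) :: 'a)"
  shows "x \<in> even_over_odd"
proof -
  have "of_int (2 ^ e) * (of_int r * x) = of_int (2 ^ e) * (of_int (2 * t) :: 'a)"
    using assms(4) by (simp only: power_Suc2 of_int_mult mult.assoc)
  then have "of_int r * x = (of_int (2 * t) :: 'a)"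
    by (rule of_int_mult_left_cancel[OF inv assms(2)])
  with \<open>odd r\<close> show ?thesis
    unfolding even_over_odd_def by blast
qed

lemma mathieu_subspace_even_over_odd:
  assumes inv: "nonzero_of_int_invertible TYPE('a::ring_1)" and char0: "CHAR('a) = 0"
    and frac: "int_fractions = (UNIV :: 'a set)"
  shows "mathieu_subspace (even_over_odd :: 'a set)"
  unfolding mathieu_subspace_def
proof (intro conjI allI impI additive_subgroup_even_over_odd)
  fix a b c :: 'a
  assume pow: "\<forall>m::nat. m \<ge> 1 \<longrightarrow> a ^ m \<in> even_over_odd"
  have "a \<in> even_over_odd"
    using pow[rule_format, of 1] by simp
  then obtain p q where q: "odd q" and a: "of_int q * a = of_int (2 * p)"
    unfolding even_over_odd_def by blast
  obtain r s where r: "of_int r \<noteq> (0::'a)" and bc: "of_int r * (b * c) = of_int s"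
    using frac unfolding int_fractions_def by blast
  define e where "e = multiplicity 2 r"
  have "r \<noteq> 0" and "\<not> is_unit (2::int)"
    using r by auto
  then obtain r' where r': "r = 2 ^ e * r'" "odd r'"
    unfolding e_def using multiplicity_decompose' by blast
  have two_pow: "of_int (2 ^ e) \<noteq> (0::'a)"
    using char0 of_int_eq_0_iff_char_dvd[where 'a = 'a, of "2 ^ e"] by simp
  have "b * a ^ m * c \<in> even_over_odd" if m: "m \<ge> Suc e" for m
  proof -
    obtain n where n: "m = Suc e + n"
      using m le_Suc_ex by blast
    have "a ^ m * c = c * a ^ m"
      by (rule int_fractions_commute[OF inv]) (simp add: frac)
    then have "b * a ^ m * c = (b * c) * a ^ m"
      by (simp add: mult.assoc)
    then have "of_int (r * q ^ m) * (b * a ^ m * c) = of_int (s * (2 * p) ^ m)"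
      using of_int_mult_clear_denominators[OF bc a] by simp
    moreover have "r * q ^ m = 2 ^ e * (r' * q ^ m)"
      using r'(1) by simp
    moreover have "s * (2 * p) ^ m = 2 ^ Suc e * (2 ^ n * p ^ m * s)"
      unfolding n by (simp add: power_add power_mult_distrib ac_simps)
    moreover have "odd (r' * q ^ m)"
      using r'(2) q by simp
    ultimately show ?thesis
      using even_over_odd_if_two_power_mult[OF inv two_pow] by metis
  qed
  then show "\<exists>N. \<forall>m\<ge>N. b * a ^ m * c \<in> even_over_odd"
    by blast
qed

lemma strongly_simple_CHAR_neq_0:
  assumes SS: "strongly_simple TYPE('a::ring_1)"
  shows "CHAR('a) \<noteq> 0"
proof
  assume char0: "CHAR('a) = 0"
  let ?M = "even_over_odd :: 'a set"
  have "mathieu_subspace ?M"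
    by (rule mathieu_subspace_even_over_odd[OF strongly_simple_imp_nonzero_of_int_invertible[OF SS]
          char0 strongly_simple_int_fractions_eq_UNIV[OF SS]])
  then have "?M = {0} \<or> ?M = UNIV"
    by (rule strongly_simpleD[OF SS])
  moreover have "2 \<in> ?M"
    unfolding even_over_odd_def by (intro CollectI exI[of _ 1] exI[of _ 1]) simp
  moreover have "(2::'a) \<noteq> 0"
    using char0 of_nat_eq_0_iff_char_dvd[where 'a = 'a, of 2] by simp
  moreover have "1 \<notin> ?M"
  proof
    assume "1 \<in> ?M"
    then obtain a b where "odd b" and "of_int b * 1 = (of_int (2 * a) :: 'a)"
      unfolding even_over_odd_def by blast
    then have "of_int (b - 2 * a) = (0::'a)"
      by simp
    then have "b = 2 * a"
      using char0 of_int_eq_0_iff_char_dvd[where 'a = 'a, of "b - 2 * a"] by simp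
    with \<open>odd b\<close> show False
      by simp
  qed
  ultimately show False
    by (metis UNIV_I singletonD)
qed

lemma additive_subgroup_trivial_if_prime_CHAR:
  fixes M :: "'a::ring_1 set"
  assumes prime: "prime CHAR('a)" and surj: "range (of_int :: int \<Rightarrow> 'a) = UNIV"
    and M: "additive_subgroup M"
  shows "M = {0} \<or> M = UNIV"
proof (cases "M \<subseteq> {0}")
  case True
  then show ?thesis
    using M by (auto simp: additive_subgroup_def)
next
  case False
  then obtain x where x: "x \<in> M" "x \<noteq> 0"
    by blast
  have "x \<in> range of_int"
    using surj by simp
  then obtain k where "x = of_int k"
    by (rule rangeE)
  with x have k: "of_int k \<in> M" "of_int k \<noteq> (0::'a)"
    by simp_all
  obtain u where u: "of_int u * of_int k = (1::'a)"
    using prime_CHAR_of_int_inverse[OF prime k(2)] by blast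
  have "of_int j \<in> M" for j
    using additive_subgroup_of_int_mult[OF M k(1), of "j * u"] u by (simp add: mult.assoc)
  then have "range of_int \<subseteq> M"
    by blast
  then have "M = UNIV"
    using surj by (intro subset_antisym) auto
  then show ?thesis
    by simp
qed

theorem strongly_simple_iff_prime_CHAR_surj_of_int:
  "strongly_simple TYPE('a::ring_1) \<longleftrightarrow> prime CHAR('a) \<and> range (of_int :: int \<Rightarrow> 'a) = UNIV"
proof
  assume SS: "strongly_simple TYPE('a)"
  have prime: "prime CHAR('a)"
    by (rule prime_CHAR_if_neq_0[OF strongly_simple_imp_nonzero_of_int_invertible[OF SS]
          strongly_simple_CHAR_neq_0[OF SS]])
  moreover have "range (of_int :: int \<Rightarrow> 'a) = UNIV"
    using int_fractions_eq_range_of_int[OF prime] strongly_simple_int_fractions_eq_UNIV[OF SS] by simp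
  ultimately show "prime CHAR('a) \<and> range (of_int :: int \<Rightarrow> 'a) = UNIV" ..
next
  assume "prime CHAR('a) \<and> range (of_int :: int \<Rightarrow> 'a) = UNIV"
  then show "strongly_simple TYPE('a)"
    unfolding strongly_simple_def mathieu_subspace_def
    using additive_subgroup_trivial_if_prime_CHAR by blast
qed

lemma ring_residue_ring:
  assumes "p > 1"
  shows "ring (residue_ring p)"
  using cring.axioms(1)[OF residues.cring] assms by (simp add: residues_def)

lemma inj_on_of_int_residues:
  assumes "CHAR('a::ring_1) = nat p"
  shows "inj_on (of_int :: int \<Rightarrow> 'a) {0..p - 1}"
  by (rule inj_onI) (auto simp: of_int_eq_iff_cong_CHAR assms intro: cong_less_imp_eq_int)

lemma type_ring_iso_residue_ringD:
  fixes p :: int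
  assumes p: "prime p" and iso: "(type_ring :: 'a::ring_1 ring) \<simeq> residue_ring p"
  shows "CHAR('a) = nat p" and "range (of_int :: int \<Rightarrow> 'a) = UNIV"
proof -
  have p1: "p > 1"
    using p prime_gt_1_int by blast
  have card: "card (UNIV :: 'a set) = nat p"
    using ring_iso_same_card[OF iso] by (simp add: type_ring_def residue_ring_def)
  have "prime (nat p)"
    using p p1 by (simp add: prime_nat_int_transfer[of "nat p", symmetric])
  moreover have "CHAR('a) dvd nat p"
    using CHAR_dvd_CARD[where 'a = 'a] card by simp
  ultimately show char: "CHAR('a) = nat p"
    using CHAR_not_1[where 'a = 'a] by (auto simp: prime_nat_iff)
  have "card (of_int ` {0..p - 1} :: 'a set) = card (UNIV :: 'a set)"
    using card card_image[OF inj_on_of_int_residues[OF char]] by simp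
  moreover have "finite (UNIV :: 'a set)"
    using card p1 by (intro card_ge_0_finite) simp
  ultimately have "of_int ` {0..p - 1} = (UNIV :: 'a set)"
    using card_subset_eq subset_UNIV by blast
  then show "range (of_int :: int \<Rightarrow> 'a) = UNIV"
    by blast
qed

lemma type_ring_iso_residue_ringI:
  fixes p :: int
  assumes p: "prime p" and char: "CHAR('a::ring_1) = nat p"
    and surj: "range (of_int :: int \<Rightarrow> 'a) = UNIV"
  shows "(type_ring :: 'a ring) \<simeq> residue_ring p"
proof -
  have p1: "p > 1"
    using p prime_gt_1_int by blast
  have of_int_mod: "(of_int (k mod p) :: 'a) = of_int k" for k
    using p1 by (simp add: of_int_eq_iff_cong_CHAR char cong_def)
  have "x \<in> of_int ` carrier (residue_ring p)" for x :: 'a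
  proof -
    have "x \<in> range of_int"
      using surj by simp
    then obtain k where "x = of_int k"
      by (rule rangeE)
    then show ?thesis
      using p1 of_int_mod[of k] by (intro rev_image_eqI[of "k mod p"]) (auto simp: residue_ring_def)
  qed
  then have "bij_betw of_int (carrier (residue_ring p)) (carrier (type_ring :: 'a ring))"
    using inj_on_of_int_residues[OF char] by (auto simp: bij_betw_def residue_ring_def type_ring_def)
  then have "(of_int :: int \<Rightarrow> 'a) \<in> ring_iso (residue_ring p) type_ring"
    by (intro ring_iso_memI) (simp_all add: residue_ring_def type_ring_def of_int_mod)
  then have "residue_ring p \<simeq> (type_ring :: 'a ring)"
    unfolding is_ring_iso_def by blast
  then show ?thesis
    using ring_iso_sym ring_residue_ring p1 by blast
qed

theorem corollary6p8:
  shows "strongly_simple TYPE('a::ring_1) \<longleftrightarrow>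
         (\<exists>p::int. prime p \<and> (type_ring :: 'a ring) \<simeq> residue_ring p)"
proof
  assume "strongly_simple TYPE('a)"
  then have prime: "prime CHAR('a)" and surj: "range (of_int :: int \<Rightarrow> 'a) = UNIV"
    by (simp_all add: strongly_simple_iff_prime_CHAR_surj_of_int)
  have "prime (int CHAR('a))"
    using prime by simp
  moreover have "(type_ring :: 'a ring) \<simeq> residue_ring (int CHAR('a))"
    using type_ring_iso_residue_ringI[OF \<open>prime (int CHAR('a))\<close> _ surj] by simp
  ultimately show "\<exists>p::int. prime p \<and> (type_ring :: 'a ring) \<simeq> residue_ring p"
    by blast
next
  assume "\<exists>p::int. prime p \<and> (type_ring :: 'a ring) \<simeq> residue_ring p"
  then obtain p :: int where p: "prime p" and iso: "(type_ring :: 'a ring) \<simeq> residue_ring p"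
    by blast
  have "prime (nat p)"
    using p by (simp add: prime_nat_int_transfer[of "nat p", symmetric] prime_ge_0_int)
  then show "strongly_simple TYPE('a)"
    using type_ring_iso_residue_ringD[OF p iso] strongly_simple_iff_prime_CHAR_surj_of_int[where 'a = 'a]
    by simp
qed

end
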